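(* Let $\mathcal D$ be universal with at least two blocks, let $\mathcal B$ be the block containing $\min(\mathcal D\setminus\{0\})$ and $\mathbf m=\max\mathcal B$. Let $\mathrm M=(M,d)\in\mathfrak U_{\mathcal D}$, let $a\in M$, and let $X=\{x\in M: d(a,x)<\mathbf m\}$. Then the subspace of $\mathrm M$ on $M\setminus X$ is a copy of $\mathrm M$ in $\mathrm M$ (i.e. is isometric to $\mathrm M$).
   Context: $\mathcal D$ is a finite subset of $\mathbb R_{\ge0}$ containing $0$. $\mathfrak U_{\mathcal D}$ is the class of countable homogeneous metric spaces (every isometry between finite subspaces extends to an isometry of the space onto itself) with distance set exactly $\mathcal D$ into which every finite metric space with distances in $\mathcal D$ embeds isometrically; $\mathcal D$ is universal if this class is nonempty. For $r\in\mathcal D$ with $r<\max\mathcal D$, $r^{+}$ is the smallest element of $\mathcal D$ larger than $r$; for $r>0$, $r^{-}$ is the largest element of $\mathcal D$ smaller than $r$. A block of $\mathcal D$ is a nonempty set $\mathcal B=\{b_0<b_1<\dots<b_n\}\subseteq\mathcal D\setminus\{0\}$ such that $b_0>2b_0^{-}$, $b_{i+1}=b_i^{+}$ for all $i<n$, and $b_i+b_0\ge b_{i+1}$ for all $i<n$; for universal $\mathcal D$ the blocks partition $\mathcal D\setminus\{0\}$. *)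

theory Defs
  imports Complex_Main "HOL-Library.Countable_Set"
begin

definition metric_on :: "'a set \<Rightarrow> ('a \<Rightarrow> 'a \<Rightarrow> real) \<Rightarrow> bool" where
  "metric_on M d \<longleftrightarrow>
     (\<forall>x\<in>M. \<forall>y\<in>M. d x y \<ge> 0 \<and> (d x y = 0 \<longleftrightarrow> x = y) \<and> d x y = d y x) \<and>
     (\<forall>x\<in>M. \<forall>y\<in>M. \<forall>z\<in>M. d x z \<le> d x y + d y z)"

definition dist_set :: "'a set \<Rightarrow> ('a \<Rightarrow> 'a \<Rightarrow> real) \<Rightarrow> real set" where
  "dist_set M d = {d x y | x y. x \<in> M \<and> y \<in> M}"

definition isometry_onto :: "'a set \<Rightarrow> ('a \<Rightarrow> 'a \<Rightarrow> real) \<Rightarrow> 'b set \<Rightarrow> ('b \<Rightarrow> 'b \<Rightarrow> real) \<Rightarrow> ('a \<Rightarrow> 'b) \<Rightarrow> bool" where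
  "isometry_onto A d B e f \<longleftrightarrow> bij_betw f A B \<and> (\<forall>x\<in>A. \<forall>y\<in>A. e (f x) (f y) = d x y)"

definition homogeneous :: "'a set \<Rightarrow> ('a \<Rightarrow> 'a \<Rightarrow> real) \<Rightarrow> bool" where
  "homogeneous M d \<longleftrightarrow>
     (\<forall>A B f. finite A \<and> A \<subseteq> M \<and> B \<subseteq> M \<and> isometry_onto A d B d f \<longrightarrow>
        (\<exists>g. isometry_onto M d M d g \<and> (\<forall>x\<in>A. g x = f x)))"

(* every finite metric space with distances in D embeds isometrically into (M,d);
   finite metric spaces are represented (up to isometry) with points in nat *)
definition embeds_all_finite :: "real set \<Rightarrow> 'a set \<Rightarrow> ('a \<Rightarrow> 'a \<Rightarrow> real) \<Rightarrow> bool" where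
  "embeds_all_finite D M d \<longleftrightarrow>
     (\<forall>(F :: nat set) e. finite F \<and> metric_on F e \<and> dist_set F e \<subseteq> D \<longrightarrow>
        (\<exists>g. g ` F \<subseteq> M \<and> isometry_onto F e (g ` F) d g))"

definition in_U :: "real set \<Rightarrow> 'a set \<Rightarrow> ('a \<Rightarrow> 'a \<Rightarrow> real) \<Rightarrow> bool" where
  "in_U D M d \<longleftrightarrow> countable M \<and> metric_on M d \<and> homogeneous M d \<and>
     dist_set M d = D \<and> embeds_all_finite D M d"

definition dist_candidate :: "real set \<Rightarrow> bool" where
  "dist_candidate D \<longleftrightarrow> finite D \<and> 0 \<in> D \<and> (\<forall>x\<in>D. 0 \<le> x)"

(* D universal: U_D nonempty (countable spaces may be taken with points in nat) *)
definition universal_dist :: "real set \<Rightarrow> bool" where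
  "universal_dist D \<longleftrightarrow> (\<exists>(M :: nat set) d. in_U D M d)"

definition succ_in :: "real set \<Rightarrow> real \<Rightarrow> real" where
  "succ_in D r = Min {x \<in> D. r < x}"

definition pred_in :: "real set \<Rightarrow> real \<Rightarrow> real" where
  "pred_in D r = Max {x \<in> D. x < r}"

(* the conditions in the definition of a block, B = {b_0 < ... < b_n}:
   B consists of consecutive elements of D, b_0 > 2 b_0^-, and b_i + b_0 >= b_{i+1} *)
definition block_cond :: "real set \<Rightarrow> real set \<Rightarrow> bool" where
  "block_cond D B \<longleftrightarrow> B \<noteq> {} \<and> B \<subseteq> D - {0} \<and>
     Min B > 2 * pred_in D (Min B) \<and>
     (\<forall>b\<in>B. b < Max B \<longrightarrow> succ_in D b \<in> B \<and> succ_in D b \<le> b + Min B)"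

(* blocks are the maximal such sets (so that they partition D - {0}) *)
definition is_block :: "real set \<Rightarrow> real set \<Rightarrow> bool" where
  "is_block D B \<longleftrightarrow> block_cond D B \<and> (\<forall>B'. block_cond D B' \<and> B \<subseteq> B' \<longrightarrow> B' = B)"

end

theory Submission
  imports Defs
begin

(* We show that Y = M minus the open ball of radius m around a is isometric to M; the
   statement of lemma9p1 is the case m = max B, which lies in D.

   The proof is a back-and-forth construction of an isometry Y -> M.
   1. One-point extensions: a Katetov function e on a finite S (distances from a new point
      compatible with the triangle inequality, values in D) is realised by a point of M,
      using the embedding property for S plus a new point and homogeneity.
   2. Relocation: every q in M can be replaced by some p in Y with the same distances to a
      given finite subset of Y (realise m at a and d(q,-) elsewhere).
   3. Finite distance preserving relations P with P in Y x M are extended forth by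
      homogeneity, and back by homogeneity followed by relocation into Y.
   4. The general back-and-forth lemma turns these extension properties into an
      isometry of the countable space Y onto M. *)

lemma metric_nonneg: "metric_on M d \<Longrightarrow> x \<in> M \<Longrightarrow> y \<in> M \<Longrightarrow> 0 \<le> d x y"
  unfolding metric_on_def by simp

lemma metric_eq_0_iff: "metric_on M d \<Longrightarrow> x \<in> M \<Longrightarrow> y \<in> M \<Longrightarrow> d x y = 0 \<longleftrightarrow> x = y"
  unfolding metric_on_def by simp

lemma metric_sym: "metric_on M d \<Longrightarrow> x \<in> M \<Longrightarrow> y \<in> M \<Longrightarrow> d x y = d y x"
  unfolding metric_on_def by simp

lemma metric_triangle:
  "metric_on M d \<Longrightarrow> x \<in> M \<Longrightarrow> y \<in> M \<Longrightarrow> z \<in> M \<Longrightarrow> d x z \<le> d x y + d y z"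
  unfolding metric_on_def by simp

lemma metric_on_subset: "metric_on M d \<Longrightarrow> S \<subseteq> M \<Longrightarrow> metric_on S d"
  unfolding metric_on_def by blast

lemma dist_set_mono: "S \<subseteq> M \<Longrightarrow> dist_set S d \<subseteq> dist_set M d"
  unfolding dist_set_def by blast

(* e prescribes positive distances from a new point to the points of S; the Katetov
   condition says these are consistent with the triangle inequality. *)
definition katetov :: "'a set \<Rightarrow> ('a \<Rightarrow> 'a \<Rightarrow> real) \<Rightarrow> ('a \<Rightarrow> real) \<Rightarrow> bool" where
  "katetov S d e \<longleftrightarrow> (\<forall>x\<in>S. 0 < e x) \<and>
     (\<forall>x\<in>S. \<forall>y\<in>S. e x \<le> d x y + e y \<and> d x y \<le> e x + e y)"

definition one_point_ext ::
  "('a \<Rightarrow> 'a \<Rightarrow> real) \<Rightarrow> ('a \<Rightarrow> real) \<Rightarrow> 'a option \<Rightarrow> 'a option \<Rightarrow> real" where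
  "one_point_ext d e u v =
     (case (u, v) of
        (Some x, Some y) \<Rightarrow> d x y
      | (Some x, None) \<Rightarrow> e x
      | (None, Some y) \<Rightarrow> e y
      | (None, None) \<Rightarrow> 0)"

lemma one_point_ext_metric:
  assumes "metric_on S d" and "katetov S d e"
  shows "metric_on (insert None (Some ` S)) (one_point_ext d e)"
  using assms unfolding metric_on_def katetov_def one_point_ext_def
  by (auto split: option.split) (smt (verit))+

lemma one_point_ext_dist_set:
  assumes "dist_set S d \<subseteq> D" and "e ` S \<subseteq> D" and "0 \<in> D"
  shows "dist_set (insert None (Some ` S)) (one_point_ext d e) \<subseteq> D"
proof
  fix r assume "r \<in> dist_set (insert None (Some ` S)) (one_point_ext d e)"
  then obtain u v where "u \<in> insert None (Some ` S)" "v \<in> insert None (Some ` S)"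
    and r: "r = one_point_ext d e u v" unfolding dist_set_def by blast
  then show "r \<in> D"
    using assms unfolding dist_set_def one_point_ext_def by (auto split: option.split)
qed

(* The embedding property of embeds_all_finite, stated for finite metric spaces on
   nat, transfers to finite metric spaces on an arbitrary type via an enumeration. *)
lemma embeds_finite_space:
  assumes emb: "embeds_all_finite D M d" and fin: "finite T"
    and met: "metric_on T \<delta>" and dist: "dist_set T \<delta> \<subseteq> D"
  shows "\<exists>g. g ` T \<subseteq> M \<and> isometry_onto T \<delta> (g ` T) d g"
proof -
  define F where "F = {..<card T}"
  obtain h where h: "bij_betw h F T"
    using ex_bij_betw_nat_finite[OF fin] unfolding F_def by (auto simp: atLeast0LessThan)
  define e where "e i j = \<delta> (h i) (h j)" for i j
  have hT: "h i \<in> T" if "i \<in> F" for i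
    using h that bij_betwE by blast
  have h_inj: "h i = h j \<longleftrightarrow> i = j" if "i \<in> F" "j \<in> F" for i j
    using h that unfolding bij_betw_def inj_on_def by blast
  have "metric_on F e"
    unfolding metric_on_def e_def
  proof (intro conjI ballI)
    fix i j assume "i \<in> F" "j \<in> F"
    then show "0 \<le> \<delta> (h i) (h j)" "\<delta> (h i) (h j) = 0 \<longleftrightarrow> i = j" "\<delta> (h i) (h j) = \<delta> (h j) (h i)"
      using met hT h_inj metric_nonneg metric_eq_0_iff metric_sym by metis+
  next
    fix i j k assume "i \<in> F" "j \<in> F" "k \<in> F"
    then show "\<delta> (h i) (h k) \<le> \<delta> (h i) (h j) + \<delta> (h j) (h k)"
      using met hT metric_triangle by metis
  qed
  moreover have "dist_set F e \<subseteq> D"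
    using dist hT unfolding dist_set_def e_def by blast
  ultimately obtain g where gM: "g ` F \<subseteq> M" and g: "isometry_onto F e (g ` F) d g"
    using emb unfolding embeds_all_finite_def F_def by blast
  define h' where "h' = inv_into F h"
  have h': "bij_betw h' T F"
    unfolding h'_def using h by (rule bij_betw_inv_into)
  have hh': "h (h' x) = x" if "x \<in> T" for x
    unfolding h'_def using h that by (simp add: bij_betw_inv_into_right)
  have img: "(g \<circ> h') ` T = g ` F"
    using h' bij_betw_imp_surj_on by (metis image_comp)
  have "bij_betw (g \<circ> h') T (g ` F)"
    using bij_betw_trans[OF h'] g unfolding isometry_onto_def by blast
  moreover have "d ((g \<circ> h') x) ((g \<circ> h') y) = \<delta> x y" if "x \<in> T" "y \<in> T" for x y
    using g h' that hh' bij_betwE unfolding isometry_onto_def e_def by fastforce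
  ultimately show ?thesis
    using gM img unfolding isometry_onto_def by metis
qed

(* Embed S plus the new point
   into M, then move the copy of S back onto S by homogeneity. *)
lemma realize_katetov:
  assumes U: "in_U D M d" and "M \<noteq> {}" and fin: "finite S" and SM: "S \<subseteq> M"
    and kat: "katetov S d e" and eD: "e ` S \<subseteq> D"
  shows "\<exists>p\<in>M. \<forall>x\<in>S. d p x = e x"
proof -
  have met: "metric_on M d" and hom: "homogeneous M d" and ds: "dist_set M d = D"
    and emb: "embeds_all_finite D M d"
    using U unfolding in_U_def by auto
  obtain x0 where "x0 \<in> M" using \<open>M \<noteq> {}\<close> by blast
  then have "0 \<in> D"
    using metric_eq_0_iff[OF met, of x0 x0] ds unfolding dist_set_def by force
  let ?T = "insert None (Some ` S)"
  have "metric_on ?T (one_point_ext d e)"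
    using one_point_ext_metric metric_on_subset[OF met SM] kat by blast
  moreover have "dist_set ?T (one_point_ext d e) \<subseteq> D"
    using one_point_ext_dist_set[OF _ eD \<open>0 \<in> D\<close>] dist_set_mono[OF SM] ds by blast
  ultimately obtain g where gM: "g ` ?T \<subseteq> M" and g: "isometry_onto ?T (one_point_ext d e) (g ` ?T) d g"
    using embeds_finite_space[OF emb] fin by (metis finite_imageI finite_insert)
  have "isometry_onto S d ((g \<circ> Some) ` S) d (g \<circ> Some)"
    using g unfolding isometry_onto_def bij_betw_def inj_on_def one_point_ext_def by auto
  then obtain G where G: "isometry_onto M d M d G" and GS: "\<forall>x\<in>S. G x = g (Some x)"
    using hom fin SM gM unfolding homogeneous_def by (metis comp_apply image_comp image_mono subset_insertI subset_trans)
  define p where "p = inv_into M G (g None)"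
  have "g None \<in> M" using gM by blast
  then have pM: "p \<in> M" and Gp: "G p = g None"
    using G unfolding isometry_onto_def p_def
    by (auto intro: bij_betw_inv_into_right inv_into_into simp: bij_betw_def)
  have "d p x = e x" if "x \<in> S" for x
  proof -
    have "d p x = d (G p) (G x)"
      using G pM SM that unfolding isometry_onto_def by auto
    also have "\<dots> = d (g None) (g (Some x))"
      using Gp GS that by simp
    also have "\<dots> = e x"
      using g that unfolding isometry_onto_def one_point_ext_def by auto
    finally show ?thesis .
  qed
  then show ?thesis using pM by blast
qed

lemma katetov_outside_ball:
  assumes met: "metric_on M d" and aM: "a \<in> M" and qM: "q \<in> M" and aq: "d a q < m"
    and TM: "T \<subseteq> M" and far: "\<forall>x\<in>T. m \<le> d a x"
  shows "katetov (insert a T) d (\<lambda>x. if x = a then m else d q x)"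
proof -
  have pos: "0 < d q x" if "x \<in> T" for x
  proof -
    have xM: "x \<in> M" using that TM by blast
    have "m \<le> d a x" using far that by blast
    then have "x \<noteq> q" using aq by auto
    then show ?thesis
      using metric_eq_0_iff[OF met qM xM] metric_nonneg[OF met qM xM] by auto
  qed
  have "0 < m" using aq metric_nonneg[OF met aM qM] by linarith
  have a_side: "d a x \<le> m + d q x" "m \<le> d a x + d q x" "d q x \<le> d x a + m" "d x a \<le> d q x + m"
    if "x \<in> T" for x
  proof -
    have xM: "x \<in> M" using that TM by blast
    have "d a x \<le> d a q + d q x" "d q x \<le> d q a + d a x"
      using metric_triangle[OF met aM qM xM] metric_triangle[OF met qM aM xM] .
    moreover have "d q a = d a q" "d x a = d a x"
      using metric_sym[OF met qM aM] metric_sym[OF met xM aM] .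
    moreover have "m \<le> d a x" using far that by blast
    ultimately show "d a x \<le> m + d q x" "m \<le> d a x + d q x" "d q x \<le> d x a + m"
      "d x a \<le> d q x + m"
      using aq pos[OF that] by linarith+
  qed
  have q_side: "d q x \<le> d x y + d q y" "d x y \<le> d q x + d q y" if "x \<in> T" "y \<in> T" for x y
  proof -
    have xM: "x \<in> M" and yM: "y \<in> M" using that TM by auto
    show "d q x \<le> d x y + d q y" "d x y \<le> d q x + d q y"
      using metric_triangle[OF met qM yM xM] metric_triangle[OF met xM qM yM]
        metric_sym[OF met xM yM] metric_sym[OF met xM qM] by linarith+
  qed
  have "d a a = 0" using metric_eq_0_iff[OF met aM aM] by blast
  have "e x \<le> d x y + e y \<and> d x y \<le> e x + e y"
    if "x \<in> insert a T" "y \<in> insert a T" and e: "e = (\<lambda>x. if x = a then m else d q x)" for e x y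
  proof (cases "x = a"; cases "y = a")
    assume "x = a" "y = a"
    then show ?thesis using e \<open>d a a = 0\<close> \<open>0 < m\<close> by simp
  next
    assume "x = a" "y \<noteq> a"
    then show ?thesis using e that a_side[of y] by simp
  next
    assume "x \<noteq> a" "y = a"
    then show ?thesis using e that a_side[of x] by simp
  next
    assume "x \<noteq> a" "y \<noteq> a"
    then show ?thesis using e that q_side[of x y] by simp
  qed
  then show ?thesis
    unfolding katetov_def using pos \<open>0 < m\<close> by simp
qed

lemma relocate_outside_ball:
  assumes U: "in_U D M d" and aM: "a \<in> M" and mD: "m \<in> D"
    and fin: "finite T" and TM: "T \<subseteq> M" and far: "\<forall>x\<in>T. m \<le> d a x" and qM: "q \<in> M"
  shows "\<exists>p\<in>M. m \<le> d a p \<and> (\<forall>x\<in>T. d p x = d q x)"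
proof (cases "m \<le> d a q")
  case True
  then show ?thesis using qM by blast
next
  case False
  have met: "metric_on M d" and ds: "dist_set M d = D"
    using U unfolding in_U_def by auto
  define e where "e x = (if x = a then m else d q x)" for x
  have eD: "e ` insert a T \<subseteq> D"
  proof
    fix r assume "r \<in> e ` insert a T"
    then obtain x where "x \<in> insert a T" "r = e x" by blast
    then show "r \<in> D"
      using mD qM TM ds unfolding e_def dist_set_def by (cases "x = a") auto
  qed
  have kat: "katetov (insert a T) d e"
    using katetov_outside_ball[OF met aM qM _ TM far] False unfolding e_def by simp
  have "finite (insert a T)" "insert a T \<subseteq> M" "M \<noteq> {}"
    using fin aM TM by auto
  from realize_katetov[OF U this(3,1,2) kat eD]
  obtain p where pM: "p \<in> M" and p: "\<forall>x\<in>insert a T. d p x = e x"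
    by blast
  have "a \<notin> T"
    using far False metric_eq_0_iff[OF met aM aM] metric_nonneg[OF met aM qM] by force
  then have "\<forall>x\<in>T. d p x = d q x" using p unfolding e_def by auto
  moreover have "d a p = m"
    using p metric_sym[OF met aM pM] unfolding e_def by simp
  ultimately show ?thesis using pM by auto
qed

(* A relation P between points is distance preserving if related pairs have equal
   distances; finite such relations are the partial isometries of the back-and-forth. *)
definition dist_preserving :: "('a \<Rightarrow> 'a \<Rightarrow> real) \<Rightarrow> ('a \<times> 'a) set \<Rightarrow> bool" where
  "dist_preserving d P \<longleftrightarrow> (\<forall>x z x' z'. (x, z) \<in> P \<longrightarrow> (x', z') \<in> P \<longrightarrow> d z z' = d x x')"

lemma dist_preservingD: "dist_preserving d P \<Longrightarrow> (x, z) \<in> P \<Longrightarrow> (x', z') \<in> P \<Longrightarrow> d z z' = d x x'"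
  unfolding dist_preserving_def by blast

lemma dist_preserving_converse: "dist_preserving d (P\<inverse>) \<longleftrightarrow> dist_preserving d P"
  unfolding dist_preserving_def by auto

lemma dist_preserving_insert:
  assumes P: "dist_preserving d P" and met: "metric_on M d" and PM: "P \<subseteq> M \<times> M"
    and yM: "y \<in> M" and zM: "z \<in> M" and yz: "\<And>x w. (x, w) \<in> P \<Longrightarrow> d z w = d y x"
  shows "dist_preserving d (insert (y, z) P)"
proof -
  have swapped: "d w z = d x y" if xw: "(x, w) \<in> P" for x w
  proof -
    have "x \<in> M" "w \<in> M" using xw PM by auto
    then show ?thesis using yz[OF xw] metric_sym[OF met zM] metric_sym[OF met yM] by simp
  qed
  have diag: "d z z = d y y"
    using metric_eq_0_iff[OF met yM yM] metric_eq_0_iff[OF met zM zM] by simp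
  show ?thesis
    unfolding dist_preserving_def
  proof (intro allI impI)
    fix x w x' w' assume "(x, w) \<in> insert (y, z) P" "(x', w') \<in> insert (y, z) P"
    then show "d w w' = d x x'"
      using dist_preservingD[OF P] yz swapped diag by auto
  qed
qed

lemma dist_preserving_functional:
  assumes R: "dist_preserving d R" and met: "metric_on M d" and RM: "R \<subseteq> M \<times> M"
    and xz: "(x, z) \<in> R" and xz': "(x, z') \<in> R"
  shows "z' = z"
proof -
  have xM: "x \<in> M" and zM: "z \<in> M" and z'M: "z' \<in> M" using xz xz' RM by auto
  have "d z z' = d x x" using dist_preservingD[OF R xz xz'] .
  then have "d z z' = 0" using metric_eq_0_iff[OF met xM xM] by simp
  then show ?thesis using metric_eq_0_iff[OF met zM z'M] by simp
qed

lemma dist_preserving_isometry: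
  assumes R: "dist_preserving d R" and met: "metric_on M d" and RM: "R \<subseteq> M \<times> M"
  shows "isometry_onto (fst ` R) d (snd ` R) d (\<lambda>x. SOME z. (x, z) \<in> R)"
proof -
  let ?f = "\<lambda>x. SOME z. (x, z) \<in> R"
  have fR: "(x, ?f x) \<in> R" if "x \<in> fst ` R" for x
  proof -
    from that obtain z where "(x, z) \<in> R" by force
    then show ?thesis by (rule someI)
  qed
  have dist: "d (?f x) (?f y) = d x y" if "x \<in> fst ` R" "y \<in> fst ` R" for x y
    using dist_preservingD[OF R fR fR] that .
  have inM: "x \<in> M" if "x \<in> fst ` R" for x
    using that RM by force
  have "inj_on ?f (fst ` R)"
  proof (rule inj_onI)
    fix x y assume xy: "x \<in> fst ` R" "y \<in> fst ` R" "?f x = ?f y"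
    have fxM: "?f x \<in> M" using fR[OF xy(1)] RM by blast
    have "d (?f x) (?f y) = 0"
      using xy(3) metric_eq_0_iff[OF met fxM fxM] by simp
    then have "d x y = 0" using dist[OF xy(1,2)] by simp
    then show "x = y" using metric_eq_0_iff[OF met inM[OF xy(1)] inM[OF xy(2)]] by simp
  qed
  moreover have "?f ` fst ` R = snd ` R"
  proof
    show "?f ` fst ` R \<subseteq> snd ` R"
    proof
      fix z assume "z \<in> ?f ` fst ` R"
      then obtain x where "x \<in> fst ` R" "z = ?f x" by blast
      then have "(x, z) \<in> R" using fR by simp
      then show "z \<in> snd ` R" by force
    qed
    show "snd ` R \<subseteq> ?f ` fst ` R"
    proof
      fix z assume "z \<in> snd ` R"
      then obtain x where xz: "(x, z) \<in> R" by force
      then have x: "x \<in> fst ` R" by force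
      have "?f x = z" using dist_preserving_functional[OF R met RM xz fR[OF x]] .
      then show "z \<in> ?f ` fst ` R" using x by blast
    qed
  qed
  ultimately show ?thesis
    unfolding isometry_onto_def bij_betw_def using dist by blast
qed

lemma homogeneousD:
  assumes "homogeneous M d" and "finite A" and "A \<subseteq> M" and "B \<subseteq> M"
    and "isometry_onto A d B d f"
  shows "\<exists>g. isometry_onto M d M d g \<and> (\<forall>x\<in>A. g x = f x)"
  using assms unfolding homogeneous_def by blast

(* In a homogeneous space every finite partial isometry extends to any further point:
   extend it to an isometry G of the whole space and map y to G y. *)
lemma homogeneous_forth:
  assumes hom: "homogeneous M d" and met: "metric_on M d" and fin: "finite P"
    and P: "dist_preserving d P" and PM: "P \<subseteq> M \<times> M" and yM: "y \<in> M"
  shows "\<exists>z\<in>M. dist_preserving d (insert (y, z) P)"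
proof -
  let ?f = "\<lambda>x. SOME z. (x, z) \<in> P"
  have "finite (fst ` P)" "fst ` P \<subseteq> M" "snd ` P \<subseteq> M" using PM fin by auto
  from homogeneousD[OF hom this dist_preserving_isometry[OF P met PM]]
  obtain G where G: "isometry_onto M d M d G" and GP: "\<forall>x\<in>fst ` P. G x = ?f x"
    by blast
  have GM: "G y \<in> M" using G yM unfolding isometry_onto_def bij_betw_def by blast
  have "d (G y) w = d y x" if xw: "(x, w) \<in> P" for x w
  proof -
    have x: "x \<in> fst ` P" using xw by force
    have "(x, ?f x) \<in> P" using xw by (rule someI)
    then have "?f x = w" using dist_preserving_functional[OF P met PM xw] by simp
    moreover have "G x = ?f x" using GP x by blast
    ultimately have "G x = w" by simp
    moreover have "x \<in> M" using xw PM by blast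
    ultimately show ?thesis using G yM unfolding isometry_onto_def by auto
  qed
  then show ?thesis using dist_preserving_insert[OF P met PM yM GM] GM by blast
qed

lemma homogeneous_back:
  assumes hom: "homogeneous M d" and met: "metric_on M d" and fin: "finite P"
    and P: "dist_preserving d P" and PM: "P \<subseteq> M \<times> M" and zM: "z \<in> M"
  shows "\<exists>y\<in>M. dist_preserving d (insert (y, z) P)"
proof -
  have "finite (P\<inverse>)" "dist_preserving d (P\<inverse>)" "P\<inverse> \<subseteq> M \<times> M"
    using fin P PM dist_preserving_converse by auto
  from homogeneous_forth[OF hom met this zM]
  obtain y where yM: "y \<in> M" and "dist_preserving d (insert (z, y) (P\<inverse>))" by blast
  moreover have "insert (z, y) (P\<inverse>) = (insert (y, z) P)\<inverse>" by auto
  ultimately have "dist_preserving d (insert (y, z) P)"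
    using dist_preserving_converse[of d "insert (y, z) P"] by simp
  then show ?thesis using yM by blast
qed

lemma dist_preserving_replace_source:
  assumes Pq: "dist_preserving d (insert (q, z) P)" and P: "dist_preserving d P"
    and met: "metric_on M d" and PM: "P \<subseteq> M \<times> M" and pM: "p \<in> M" and zM: "z \<in> M"
    and pq: "\<forall>x\<in>fst ` P. d p x = d q x"
  shows "dist_preserving d (insert (p, z) P)"
proof (rule dist_preserving_insert[OF P met PM pM zM])
  fix x w assume xw: "(x, w) \<in> P"
  have "d z w = d q x" using dist_preservingD[OF Pq, of q z x w] xw by simp
  moreover have "x \<in> fst ` P" using xw by force
  then have "d p x = d q x" using pq by blast
  ultimately show "d z w = d p x" by simp
qed

(* The back-and-forth chain: at even stages the next point of Y gets an image, at odd
   stages the next point of M gets a preimage; choices are made by Hilbert choice. *)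
definition forth_step :: "('a \<Rightarrow> 'a \<Rightarrow> real) \<Rightarrow> 'a set \<Rightarrow> 'a \<Rightarrow> ('a \<times> 'a) set \<Rightarrow> ('a \<times> 'a) set" where
  "forth_step d M y P = insert (y, SOME z. z \<in> M \<and> dist_preserving d (insert (y, z) P)) P"

definition back_step :: "('a \<Rightarrow> 'a \<Rightarrow> real) \<Rightarrow> 'a set \<Rightarrow> 'a \<Rightarrow> ('a \<times> 'a) set \<Rightarrow> ('a \<times> 'a) set" where
  "back_step d Y z P = insert (SOME y. y \<in> Y \<and> dist_preserving d (insert (y, z) P), z) P"

primrec bf_chain :: "('a \<Rightarrow> 'a \<Rightarrow> real) \<Rightarrow> 'a set \<Rightarrow> 'a set \<Rightarrow> nat \<Rightarrow> ('a \<times> 'a) set" where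
  "bf_chain d Y M 0 = {}"
| "bf_chain d Y M (Suc n) =
     (if even n then forth_step d M (from_nat_into Y (n div 2)) (bf_chain d Y M n)
      else back_step d Y (from_nat_into M (n div 2)) (bf_chain d Y M n))"

lemma forth_step_props:
  assumes "\<exists>z\<in>M. dist_preserving d (insert (y, z) P)" and "y \<in> Y" and "P \<subseteq> Y \<times> M"
  shows "dist_preserving d (forth_step d M y P) \<and> forth_step d M y P \<subseteq> Y \<times> M"
proof -
  let ?z = "SOME z. z \<in> M \<and> dist_preserving d (insert (y, z) P)"
  from assms(1) have "\<exists>z. z \<in> M \<and> dist_preserving d (insert (y, z) P)" by blast
  then have "?z \<in> M \<and> dist_preserving d (insert (y, ?z) P)" by (rule someI_ex)
  then show ?thesis using assms(2,3) unfolding forth_step_def by blast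
qed

lemma back_step_props:
  assumes "\<exists>y\<in>Y. dist_preserving d (insert (y, z) P)" and "z \<in> M" and "P \<subseteq> Y \<times> M"
  shows "dist_preserving d (back_step d Y z P) \<and> back_step d Y z P \<subseteq> Y \<times> M"
proof -
  let ?y = "SOME y. y \<in> Y \<and> dist_preserving d (insert (y, z) P)"
  from assms(1) have "\<exists>y. y \<in> Y \<and> dist_preserving d (insert (y, z) P)" by blast
  then have "?y \<in> Y \<and> dist_preserving d (insert (?y, z) P)" by (rule someI_ex)
  then show ?thesis using assms(2,3) unfolding back_step_def by blast
qed

(* The union of an increasing chain of distance preserving relations is distance
   preserving, since any two of its pairs already occur at a common stage. *)
lemma dist_preserving_Union_chain:
  assumes dp: "\<And>n. dist_preserving d (C n)" and step: "\<And>n. C n \<subseteq> C (Suc n)"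
  shows "dist_preserving d (\<Union>n. C n)"
  unfolding dist_preserving_def
proof (intro allI impI)
  fix x z x' z' assume "(x, z) \<in> (\<Union>n. C n)" "(x', z') \<in> (\<Union>n. C n)"
  then obtain i j where "(x, z) \<in> C i" "(x', z') \<in> C j" by blast
  moreover have "C i \<subseteq> C (max i j)" "C j \<subseteq> C (max i j)"
    using lift_Suc_mono_le[of C, OF step] by simp_all
  ultimately have "(x, z) \<in> C (max i j)" "(x', z') \<in> C (max i j)" by blast+
  then show "d z z' = d x x'" by (rule dist_preservingD[OF dp])
qed

lemma bf_chain_step: "bf_chain d Y M n \<subseteq> bf_chain d Y M (Suc n)"
  by (simp add: forth_step_def back_step_def subset_insertI)

lemma bf_chain_covers_Y:
  assumes "Y \<noteq> {}" and "countable Y" and "y \<in> Y"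
  shows "\<exists>n z. (y, z) \<in> bf_chain d Y M n"
proof -
  obtain k where k: "y = from_nat_into Y k" using range_from_nat_into[OF assms(1,2)] assms(3) by blast
  have "even (2 * k)" "2 * k div 2 = k" by simp_all
  then have "\<exists>z. (y, z) \<in> bf_chain d Y M (Suc (2 * k))"
    using k by (simp add: forth_step_def) blast
  then show ?thesis by blast
qed

lemma bf_chain_covers_M:
  assumes "M \<noteq> {}" and "countable M" and "z \<in> M"
  shows "\<exists>n y. (y, z) \<in> bf_chain d Y M n"
proof -
  obtain k where k: "z = from_nat_into M k" using range_from_nat_into[OF assms(1,2)] assms(3) by blast
  have "odd (Suc (2 * k))" "Suc (2 * k) div 2 = k" by simp_all
  then have "\<exists>y. (y, z) \<in> bf_chain d Y M (Suc (Suc (2 * k)))"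
    using k by (simp add: back_step_def) blast
  then show ?thesis by blast
qed

lemma bf_chain_invariant:
  assumes Y: "Y \<noteq> {}" and M: "M \<noteq> {}"
    and extend_forth: "\<And>P y. finite P \<Longrightarrow> dist_preserving d P \<Longrightarrow> P \<subseteq> Y \<times> M \<Longrightarrow> y \<in> Y \<Longrightarrow>
      \<exists>z\<in>M. dist_preserving d (insert (y, z) P)"
    and extend_back: "\<And>P z. finite P \<Longrightarrow> dist_preserving d P \<Longrightarrow> P \<subseteq> Y \<times> M \<Longrightarrow> z \<in> M \<Longrightarrow>
      \<exists>y\<in>Y. dist_preserving d (insert (y, z) P)"
  shows "finite (bf_chain d Y M n) \<and> dist_preserving d (bf_chain d Y M n) \<and>
    bf_chain d Y M n \<subseteq> Y \<times> M"
proof (induction n)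
  case 0
  then show ?case unfolding dist_preserving_def by simp
next
  case (Suc n)
  let ?P = "bf_chain d Y M n"
  have y: "from_nat_into Y (n div 2) \<in> Y" using from_nat_into[OF Y] .
  have z: "from_nat_into M (n div 2) \<in> M" using from_nat_into[OF M] .
  from Suc have fin: "finite ?P" and dp: "dist_preserving d ?P" and sub: "?P \<subseteq> Y \<times> M"
    by blast+
  show ?case
  proof (cases "even n")
    case True
    then show ?thesis
      using forth_step_props[OF extend_forth[OF fin dp sub y] y sub] fin
      by (simp add: forth_step_def)
  next
    case False
    then show ?thesis
      using back_step_props[OF extend_back[OF fin dp sub z] z sub] fin
      by (simp add: back_step_def)
  qed
qed

(* The
   union of the chain is a distance preserving relation with domain Y and range M. *)
lemma back_and_forth:
  assumes met: "metric_on M d" and YM: "Y \<subseteq> M" and cM: "countable M" and Y: "Y \<noteq> {}"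
    and extend_forth: "\<And>P y. finite P \<Longrightarrow> dist_preserving d P \<Longrightarrow> P \<subseteq> Y \<times> M \<Longrightarrow> y \<in> Y \<Longrightarrow>
      \<exists>z\<in>M. dist_preserving d (insert (y, z) P)"
    and extend_back: "\<And>P z. finite P \<Longrightarrow> dist_preserving d P \<Longrightarrow> P \<subseteq> Y \<times> M \<Longrightarrow> z \<in> M \<Longrightarrow>
      \<exists>y\<in>Y. dist_preserving d (insert (y, z) P)"
  shows "\<exists>f. isometry_onto Y d M d f"
proof -
  have M: "M \<noteq> {}" using Y YM by blast
  have cY: "countable Y" using cM YM countable_subset by blast
  note inv = bf_chain_invariant[OF Y M extend_forth extend_back]
  define R where "R = (\<Union>n. bf_chain d Y M n)"
  have RYM: "R \<subseteq> Y \<times> M" unfolding R_def using inv by blast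
  have "dist_preserving d R"
    unfolding R_def
  proof (rule dist_preserving_Union_chain)
    show "dist_preserving d (bf_chain d Y M n)" for n using inv by blast
  qed (rule bf_chain_step)
  moreover have "fst ` R = Y"
  proof
    show "fst ` R \<subseteq> Y" using image_mono[OF RYM, of fst] M by simp
    show "Y \<subseteq> fst ` R"
    proof
      fix y assume "y \<in> Y"
      then obtain n z where "(y, z) \<in> bf_chain d Y M n" using bf_chain_covers_Y[OF Y cY] by blast
      then have "(y, z) \<in> R" unfolding R_def by blast
      then show "y \<in> fst ` R" by (rule rev_image_eqI) simp
    qed
  qed
  moreover have "snd ` R = M"
  proof
    show "snd ` R \<subseteq> M" using image_mono[OF RYM, of snd] Y by simp
    show "M \<subseteq> snd ` R"
    proof
      fix z assume "z \<in> M"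
      then obtain n y where "(y, z) \<in> bf_chain d Y M n" using bf_chain_covers_M[OF M cM] by blast
      then have "(y, z) \<in> R" unfolding R_def by blast
      then show "z \<in> snd ` R" by (rule rev_image_eqI) simp
    qed
  qed
  moreover have "R \<subseteq> M \<times> M" using RYM YM by blast
  ultimately have "isometry_onto Y d M d (\<lambda>x. SOME z. (x, z) \<in> R)"
    using dist_preserving_isometry[OF _ met, of R] by simp
  then show ?thesis by blast
qed

(* Main result: removing an open ball of radius m in D leaves a copy of M.  Forth
   steps use homogeneity; back steps use homogeneity and then relocation into Y. *)
lemma complement_of_ball_isometric:
  assumes U: "in_U D M d" and aM: "a \<in> M" and mD: "m \<in> D"
  shows "\<exists>f. isometry_onto (M - {x \<in> M. d a x < m}) d M d f"
proof -
  have met: "metric_on M d" and hom: "homogeneous M d" and cM: "countable M"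
    using U unfolding in_U_def by auto
  define Y where "Y = M - {x \<in> M. d a x < m}"
  have YM: "Y \<subseteq> M" and far: "\<forall>y\<in>Y. m \<le> d a y"
    unfolding Y_def by auto
  have inY: "p \<in> Y" if "p \<in> M" "m \<le> d a p" for p
    using that unfolding Y_def by auto
  obtain p where "p \<in> M" "m \<le> d a p"
    using relocate_outside_ball[OF U aM mD finite.emptyI empty_subsetI _ aM] by blast
  then have "Y \<noteq> {}" using inY by blast
  then have "\<exists>f. isometry_onto Y d M d f"
  proof (rule back_and_forth[OF met YM cM])
    fix P y assume fin: "finite P" and P: "dist_preserving d P" and PY: "P \<subseteq> Y \<times> M"
      and yY: "y \<in> Y"
    have "P \<subseteq> M \<times> M" "y \<in> M" using PY yY YM by auto
    then show "\<exists>z\<in>M. dist_preserving d (insert (y, z) P)"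
      using homogeneous_forth[OF hom met fin P] by blast
  next
    fix P z assume fin: "finite P" and P: "dist_preserving d P" and PY: "P \<subseteq> Y \<times> M"
      and zM: "z \<in> M"
    have PM: "P \<subseteq> M \<times> M" using PY YM by blast
    obtain q where qM: "q \<in> M" and Pq: "dist_preserving d (insert (q, z) P)"
      using homogeneous_back[OF hom met fin P PM zM] by blast
    have "finite (fst ` P)" "fst ` P \<subseteq> M" "\<forall>x\<in>fst ` P. m \<le> d a x"
      using fin PY YM far by auto
    from relocate_outside_ball[OF U aM mD this qM]
    obtain p where pM: "p \<in> M" and "m \<le> d a p" and pq: "\<forall>x\<in>fst ` P. d p x = d q x"
      by blast
    then have "p \<in> Y" using inY by blast
    moreover have "dist_preserving d (insert (p, z) P)"
      using dist_preserving_replace_source[OF Pq P met PM pM zM pq] .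
    ultimately show "\<exists>y\<in>Y. dist_preserving d (insert (y, z) P)" by blast
  qed
  then show ?thesis unfolding Y_def .
qed

(* The block B is a nonempty finite subset of D, so its maximum is a distance in D. *)
theorem lemma9p1:
  fixes D :: "real set" and B :: "real set" and M :: "'a set" and d :: "'a \<Rightarrow> 'a \<Rightarrow> real" and a :: 'a
  assumes "dist_candidate D"
    and "universal_dist D"
    and "\<exists>B1 B2. is_block D B1 \<and> is_block D B2 \<and> B1 \<noteq> B2"
    and "is_block D B" and "Min (D - {0}) \<in> B"
    and "in_U D M d"
    and "a \<in> M"
  shows "\<exists>f. isometry_onto (M - {x \<in> M. d a x < Max B}) d M d f"
proof -
  have "finite D" using assms(1) unfolding dist_candidate_def by blast
  moreover have "B \<noteq> {}" and "B \<subseteq> D - {0}"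
    using assms(4) unfolding is_block_def block_cond_def by auto
  ultimately have "Max B \<in> D"
    using Max_in[of B] finite_subset[of B D] by blast
  then show ?thesis using complement_of_ball_isometric[OF assms(6,7)] by blast
qed

end
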